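(* Let $\Delta_2=\{A=(a_{ij})\in SL_3(\mathfrak{o}) : a_{21}=a_{31}=0\}$. Then $$\Delta_2=\bigsqcup_{y\in Y(\mathfrak{o})}\ \bigsqcup_{d\in D(3)}\ \bigsqcup_{u\in U(3)} \varphi_2(y^{-1})\,d\,u\,\Gamma_\infty(3),$$ i.e. $\Delta_2$ is the union of the sets $\varphi_2(y^{-1})du\Gamma_\infty(3)$ and these sets are pairwise disjoint for distinct triples $(y,d,u)$.
   Context: Let $\omega=e^{2\pi i/3}$, $\mathfrak{o}=\mathbb{Z}[\omega]$, $\mathfrak{o}^\times$ its unit group. Fix representatives of nonzero elements modulo units ("$c\in(\mathfrak{o}-\{0\})/\mathfrak{o}^\times$") and, for each nonzero $c$, representatives of $\mathfrak{o}/c\mathfrak{o}$ ("$a\in\mathfrak{o}/c\mathfrak{o}$"). $Y(\mathfrak{o})=\{\begin{pmatrix}a&b\\c&d\end{pmatrix}\in SL_2(\mathfrak{o}) : c\in(\mathfrak{o}-\{0\})/\mathfrak{o}^\times,\ a\in\mathfrak{o}/c\mathfrak{o}\}\cup\{I_2\}$. $\Gamma(3)=\{A\in SL_3(\mathfrak{o}):A\equiv I_3\pmod{3\mathfrak{o}}\}$ (entrywise), $\Gamma_\infty(3)$ its subgroup of upper triangular unipotent matrices. $D(3)$: diagonal $\mathrm{diag}(i,j,k)$ with $i,j,k\in\mathfrak{o}$, $ijk=1$. $U(3)$: matrices $\begin{pmatrix}1&\alpha&\beta\\&1&\gamma\\&&1\end{pmatrix}$ with $\alpha,\beta,\gamma\in\{0,1,2\}+\{0,1,2\}\omega$.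 For $y=\begin{pmatrix}a&b\\c&d\end{pmatrix}\in SL_2(\mathfrak{o})$, $\varphi_2(y)=\begin{pmatrix}1&0&0\\0&a&b\\0&c&d\end{pmatrix}$. *)

theory Defs
  imports Complex_Main "Jordan_Normal_Form.Determinant"
begin

definition omega :: complex where
  "omega = exp (2 * of_real pi * \<i> / 3)"

definition eis :: "complex set" where
  "eis = {of_int a + of_int b * omega | a b. True}"

definition eis_units :: "complex set" where
  "eis_units = {u \<in> eis. \<exists>v\<in>eis. u * v = 1}"

definition eis_dvd :: "complex \<Rightarrow> complex \<Rightarrow> bool" where
  "eis_dvd c x \<longleftrightarrow> (\<exists>k\<in>eis. x = c * k)"

definition nonzero_reps :: "complex set \<Rightarrow> bool" where
  "nonzero_reps C \<longleftrightarrow> C \<subseteq> eis - {0} \<and>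
     (\<forall>x\<in>eis - {0}. \<exists>!c. c \<in> C \<and> (\<exists>u\<in>eis_units. x = u * c))"

definition residue_reps :: "complex set \<Rightarrow> (complex \<Rightarrow> complex set) \<Rightarrow> bool" where
  "residue_reps C R \<longleftrightarrow> (\<forall>c\<in>C. R c \<subseteq> eis \<and>
     (\<forall>x\<in>eis. \<exists>!r. r \<in> R c \<and> eis_dvd c (x - r)))"

definition SL :: "nat \<Rightarrow> complex mat set" where
  "SL n = {A \<in> carrier_mat n n. det A = 1 \<and> (\<forall>i<n. \<forall>j<n. A $$ (i,j) \<in> eis)}"

(* Y(o), with entries indexed from 0: a = y(0,0), b = y(0,1), c = y(1,0), d = y(1,1) *)
definition Y :: "complex set \<Rightarrow> (complex \<Rightarrow> complex set) \<Rightarrow> complex mat set" where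
  "Y C R = {y \<in> SL 2. y $$ (1,0) \<in> C \<and> y $$ (0,0) \<in> R (y $$ (1,0))} \<union> {1\<^sub>m 2}"

(* inverse of a matrix in SL_2 (adjugate, valid since det = 1) *)
definition inv2 :: "complex mat \<Rightarrow> complex mat" where
  "inv2 y = mat_of_rows_list 2 [[y $$ (1,1), - y $$ (0,1)], [- y $$ (1,0), y $$ (0,0)]]"

definition phi2 :: "complex mat \<Rightarrow> complex mat" where
  "phi2 y = mat_of_rows_list 3 [[1, 0, 0], [0, y $$ (0,0), y $$ (0,1)], [0, y $$ (1,0), y $$ (1,1)]]"

definition Gamma3 :: "complex mat set" where
  "Gamma3 = {A \<in> SL 3. \<forall>i<3. \<forall>j<3. eis_dvd 3 (A $$ (i,j) - (1\<^sub>m 3) $$ (i,j))}"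

definition Gamma_inf3 :: "complex mat set" where
  "Gamma_inf3 = {A \<in> Gamma3. (\<forall>i<3. A $$ (i,i) = 1) \<and> (\<forall>i<3. \<forall>j<i. A $$ (i,j) = 0)}"

definition D3 :: "complex mat set" where
  "D3 = {mat_of_rows_list 3 [[i, 0, 0], [0, j, 0], [0, 0, k]] | i j k.
           i \<in> eis \<and> j \<in> eis \<and> k \<in> eis \<and> i * j * k = 1}"

definition digits3 :: "complex set" where
  "digits3 = {of_int a + of_int b * omega | a b. a \<in> {0,1,2} \<and> b \<in> {0,1,2}}"

definition U3 :: "complex mat set" where
  "U3 = {mat_of_rows_list 3 [[1, \<alpha>, \<beta>], [0, 1, \<gamma>], [0, 0, 1]] | \<alpha> \<beta> \<gamma>.
           \<alpha> \<in> digits3 \<and> \<beta> \<in> digits3 \<and> \<gamma> \<in> digits3}"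

(* Delta_2 = {A in SL_3(o) : a21 = a31 = 0} (0-indexed: entries (1,0),(2,0)) *)
definition Delta2 :: "complex mat set" where
  "Delta2 = {A \<in> SL 3. A $$ (1,0) = 0 \<and> A $$ (2,0) = 0}"

definition piece :: "complex mat \<Rightarrow> complex mat \<Rightarrow> complex mat \<Rightarrow> complex mat set" where
  "piece y d u = {phi2 (inv2 y) * d * u * g | g. g \<in> Gamma_inf3}"

end

theory Submission
  imports Defs
begin

(* If A = phi_2(y^-1) T then phi_2(y) A = T, so A lies in the piece of (y, d, u) exactly when
   phi_2(y) A is the upper triangular matrix d u g for some g in Gamma_infty(3).
   For A in Delta_2 the column (a_22, a_32) is primitive, and phi_2(y) A is upper triangular iff
   the bottom row (c, d) of y kills that column; such rows of SL_2(o) are the unit multiples of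
   (-a_32, a_22), so fixing c in C and then a modulo c singles out exactly one y in Y.
   An upper triangular T in SL_3(o) is its diagonal, an element of D(3), times a unipotent matrix,
   and a unipotent matrix lies in exactly one coset u Gamma_infty(3) with u in U(3) because the
   digits {0,1,2} + {0,1,2} omega represent o/3o. *)

section \<open>Eisenstein integers\<close>

lemma omega_eq: "omega = Complex (-1/2) (sqrt 3 / 2)"
proof -
  have "omega = cis (2 * pi / 3)"
    unfolding omega_def cis_conv_exp by (simp add: mult.commute)
  then show ?thesis by (simp add: cis.ctr cos_120 sin_120)
qed

lemma omega_mult_omega: "omega * omega = -1 - omega"
  by (simp add: omega_eq complex_eq_iff field_simps)

lemma eis_iff: "x \<in> eis \<longleftrightarrow> (\<exists>a b. x = of_int a + of_int b * omega)"
  by (auto simp: eis_def)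

lemma eis_coeffs_eq_iff:
  "of_int a + of_int b * omega = of_int a' + of_int b' * omega \<longleftrightarrow> a = a' \<and> b = b'"
  by (auto simp: omega_eq complex_eq_iff)

lemma eis_of_int [simp]: "of_int n \<in> eis"
  unfolding eis_iff by (rule exI[of _ n], rule exI[of _ 0]) simp

lemma eis_0 [simp]: "0 \<in> eis" and eis_1 [simp]: "1 \<in> eis" and eis_3 [simp]: "3 \<in> eis"
  using eis_of_int[of 0] eis_of_int[of 1] eis_of_int[of 3] by simp_all

lemma eis_add [simp]: "x \<in> eis \<Longrightarrow> y \<in> eis \<Longrightarrow> x + y \<in> eis"
proof -
  assume "x \<in> eis" "y \<in> eis"
  then obtain a b c d where "x = of_int a + of_int b * omega" "y = of_int c + of_int d * omega"
    by (auto simp: eis_iff)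
  then have "x + y = of_int (a + c) + of_int (b + d) * omega" by (simp add: algebra_simps)
  then show ?thesis unfolding eis_iff by blast
qed

lemma eis_uminus [simp]: "x \<in> eis \<Longrightarrow> - x \<in> eis"
proof -
  assume "x \<in> eis"
  then obtain a b where "x = of_int a + of_int b * omega" by (auto simp: eis_iff)
  then have "- x = of_int (- a) + of_int (- b) * omega" by (simp add: algebra_simps)
  then show ?thesis unfolding eis_iff by blast
qed

lemma eis_diff [simp]: "x \<in> eis \<Longrightarrow> y \<in> eis \<Longrightarrow> x - y \<in> eis"
  using eis_add[of x "- y"] by simp

lemma eis_mult [simp]: "x \<in> eis \<Longrightarrow> y \<in> eis \<Longrightarrow> x * y \<in> eis"
proof -
  assume "x \<in> eis" "y \<in> eis"
  then obtain a b c d where xy: "x = of_int a + of_int b * omega" "y = of_int c + of_int d * omega"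
    by (auto simp: eis_iff)
  have "x * y = of_int a * of_int c + (of_int a * of_int d + of_int b * of_int c) * omega
      + of_int b * of_int d * (omega * omega)"
    unfolding xy by (simp add: algebra_simps)
  also have "\<dots> = of_int (a*c - b*d) + of_int (a*d + b*c - b*d) * omega"
    unfolding omega_mult_omega by (simp add: algebra_simps)
  finally show ?thesis unfolding eis_iff by blast
qed

lemma eis_sum: "(\<And>i. i \<in> S \<Longrightarrow> f i \<in> eis) \<Longrightarrow> sum f S \<in> eis"
  by (induction S rule: infinite_finite_induct) auto

lemma eis_dvd_imp_eis: "c \<in> eis \<Longrightarrow> eis_dvd c x \<Longrightarrow> x \<in> eis"
  unfolding eis_dvd_def by auto

lemma eis_dvd_0 [simp]: "eis_dvd c 0"
  unfolding eis_dvd_def by (rule bexI[of _ 0]) auto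

lemma eis_dvd_add: "eis_dvd c x \<Longrightarrow> eis_dvd c y \<Longrightarrow> eis_dvd c (x + y)"
  unfolding eis_dvd_def by (metis distrib_left eis_add)

lemma eis_dvd_diff: "eis_dvd c x \<Longrightarrow> eis_dvd c y \<Longrightarrow> eis_dvd c (x - y)"
  unfolding eis_dvd_def by (metis right_diff_distrib eis_diff)

lemma eis_dvd_mult_left: "eis_dvd c x \<Longrightarrow> y \<in> eis \<Longrightarrow> eis_dvd c (y * x)"
  unfolding eis_dvd_def by (metis mult.left_commute eis_mult)

lemma digits3_subset_eis: "digits3 \<subseteq> eis"
  by (auto simp: digits3_def eis_def)

lemma ex_digits3_cong: "x \<in> eis \<Longrightarrow> \<exists>r\<in>digits3. eis_dvd 3 (x - r)"
proof -
  assume "x \<in> eis"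
  then obtain a b where x: "x = of_int a + of_int b * omega" by (auto simp: eis_iff)
  define r where "r = of_int (a mod 3) + of_int (b mod 3) * omega"
  have "r \<in> digits3"
    unfolding r_def digits3_def by (intro CollectI exI[of _ "a mod 3"] exI[of _ "b mod 3"]) auto
  moreover have "x - r = 3 * (of_int (a div 3) + of_int (b div 3) * omega)"
  proof -
    have "x - r = of_int (a - a mod 3) + of_int (b - b mod 3) * omega"
      unfolding x r_def by (simp add: algebra_simps)
    also have "\<dots> = of_int (3 * (a div 3)) + of_int (3 * (b div 3)) * omega"
      by (simp only: minus_mod_eq_mult_div)
    finally show ?thesis by (simp add: algebra_simps)
  qed
  moreover have "of_int (a div 3) + of_int (b div 3) * omega \<in> eis"
    unfolding eis_iff by blast
  ultimately show ?thesis unfolding eis_dvd_def by blast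
qed

lemma digits3_cong_imp_eq:
  assumes "r \<in> digits3" "r' \<in> digits3" "eis_dvd 3 (r - r')"
  shows "r = r'"
proof -
  obtain a b a' b' m where ab: "r = of_int a + of_int b * omega" "a \<in> {0,1,2}" "b \<in> {0,1,2}"
    and ab': "r' = of_int a' + of_int b' * omega" "a' \<in> {0,1,2}" "b' \<in> {0,1,2}"
    and m: "m \<in> eis" "r - r' = 3 * m"
    using assms unfolding digits3_def eis_dvd_def by blast
  obtain c d where cd: "m = of_int c + of_int d * omega" using m by (auto simp: eis_iff)
  have "of_int (a - a') + of_int (b - b') * omega = of_int (3*c) + of_int (3*d) * omega"
    using m(2) unfolding ab ab' cd by (simp add: algebra_simps)
  then have "a - a' = 3 * c" "b - b' = 3 * d" unfolding eis_coeffs_eq_iff by auto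
  with ab(2,3) ab'(2,3) have "a = a'" "b = b'" by (auto; presburger)+
  then show ?thesis using ab ab' by simp
qed

lemma eis_unitsI: "u \<in> eis \<Longrightarrow> v \<in> eis \<Longrightarrow> u * v = 1 \<Longrightarrow> u \<in> eis_units"
  unfolding eis_units_def by blast

lemma eis_units_iff: "u \<in> eis_units \<longleftrightarrow> u \<in> eis \<and> u \<noteq> 0 \<and> inverse u \<in> eis"
  unfolding eis_units_def by (auto simp: inverse_unique intro!: bexI[of _ "inverse u"])

lemma eis_units_mult: "u \<in> eis_units \<Longrightarrow> v \<in> eis_units \<Longrightarrow> u * v \<in> eis_units"
  unfolding eis_units_iff by (simp add: inverse_mult_distrib)

lemma eis_units_inverse: "u \<in> eis_units \<Longrightarrow> inverse u \<in> eis_units"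
  unfolding eis_units_iff by simp

lemma nonzero_reps_unique:
  assumes "nonzero_reps C" "c \<in> C" "c' \<in> C" "u \<in> eis_units" "c = u * c'"
  shows "c = c'"
proof -
  have "c \<in> eis - {0}" using assms(1,2) unfolding nonzero_reps_def by auto
  with assms(1) have "\<exists>!c0. c0 \<in> C \<and> (\<exists>v\<in>eis_units. c = v * c0)"
    unfolding nonzero_reps_def by blast
  moreover have "1 \<in> eis_units" by (rule eis_unitsI) auto
  ultimately show ?thesis using assms(2-5) by (metis mult_1)
qed

lemma residue_reps_unique:
  assumes "residue_reps C R" "c \<in> C" "r \<in> R c" "r' \<in> R c" "eis_dvd c (r - r')"
  shows "r = r'"
proof -
  have "r \<in> eis" using assms(1-3) unfolding residue_reps_def by auto
  with assms(1,2) have "\<exists>!s. s \<in> R c \<and> eis_dvd c (r - s)"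
    unfolding residue_reps_def by blast
  with assms(3-5) show ?thesis by auto
qed

lemma less2_iff: "(i::nat) < 2 \<longleftrightarrow> i = 0 \<or> i = 1" by auto
lemma less3_iff: "(i::nat) < 3 \<longleftrightarrow> i = 0 \<or> i = 1 \<or> i = 2" by auto

lemma SL_mult:
  assumes "A \<in> SL n" "B \<in> SL n"
  shows "A * B \<in> SL n"
proof -
  have A: "A \<in> carrier_mat n n" and B: "B \<in> carrier_mat n n"
    using assms by (auto simp: SL_def)
  have "det (A * B) = 1"
    using assms by (simp add: SL_def det_mult[OF A B])
  moreover have "(A * B) $$ (i,j) \<in> eis" if "i < n" "j < n" for i j
    using A B assms that by (auto simp: SL_def scalar_prod_def intro!: eis_sum)
  ultimately show ?thesis using A B by (auto simp: SL_def)
qed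

lemma det_2x2:
  assumes "(A :: 'a :: comm_ring_1 mat) \<in> carrier_mat 2 2"
  shows "det A = A $$ (0,0) * A $$ (1,1) - A $$ (0,1) * A $$ (1,0)"
proof -
  have dims: "dim_row A = 2" "dim_col A = 2" using assms by auto
  have minors: "mat_delete A i 0 \<in> carrier_mat 1 1" for i
    using mat_delete_carrier[OF assms, of i 0] by simp
  have "det A = (\<Sum>i<2. A $$ (i,0) * cofactor A i 0)"
    by (rule laplace_expansion_column[OF assms]) simp
  also have "\<dots> = A $$ (0,0) * cofactor A 0 0 + A $$ (1,0) * cofactor A 1 0"
    by (simp add: numeral_2_eq_2)
  also have "cofactor A 0 0 = A $$ (1,1)"
    unfolding cofactor_def det_single[OF minors]
    by (simp add: mat_delete_def dims)
  also have "cofactor A 1 0 = - A $$ (0,1)"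
    unfolding cofactor_def det_single[OF minors]
    by (simp add: mat_delete_def dims)
  finally show ?thesis by (simp add: algebra_simps)
qed

lemma det_3x3_first_col_zero:
  assumes "(A :: 'a :: comm_ring_1 mat) \<in> carrier_mat 3 3" "A $$ (1,0) = 0" "A $$ (2,0) = 0"
  shows "det A = A $$ (0,0) * (A $$ (1,1) * A $$ (2,2) - A $$ (1,2) * A $$ (2,1))"
proof -
  have dims: "dim_row A = 3" "dim_col A = 3" using assms by auto
  have minor: "mat_delete A 0 0 \<in> carrier_mat 2 2"
    using mat_delete_carrier[OF assms(1), of 0 0] by simp
  have "{..<3::nat} = {0,1,2}" by auto
  then have "det A = (\<Sum>i\<in>{0,1,2}. A $$ (i,0) * cofactor A i 0)"
    using laplace_expansion_column[OF assms(1), of 0] by simp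
  also have "\<dots> = A $$ (0,0) * cofactor A 0 0"
    using assms(2,3) by simp
  also have "cofactor A 0 0 = A $$ (1,1) * A $$ (2,2) - A $$ (1,2) * A $$ (2,1)"
    unfolding cofactor_def det_2x2[OF minor]
    by (simp add: mat_delete_def dims numeral_2_eq_2)
  finally show ?thesis .
qed

definition mat3 :: "'a \<Rightarrow> 'a \<Rightarrow> 'a \<Rightarrow> 'a \<Rightarrow> 'a \<Rightarrow> 'a \<Rightarrow> 'a \<Rightarrow> 'a \<Rightarrow> 'a \<Rightarrow> 'a mat" where
  "mat3 a b c d e f g h i = mat_of_rows_list 3 [[a, b, c], [d, e, f], [g, h, i]]"

lemma mat3_carrier [simp]:
  "mat3 a b c d e f g h i \<in> carrier_mat 3 3"
  "dim_row (mat3 a b c d e f g h i) = 3" "dim_col (mat3 a b c d e f g h i) = 3"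
  by (simp_all add: mat3_def mat_of_rows_list_def carrier_matI)

lemma mat3_index [simp]:
  "mat3 a b c d e f g h i $$ (0,0) = a" "mat3 a b c d e f g h i $$ (0,1) = b"
  "mat3 a b c d e f g h i $$ (0,2) = c" "mat3 a b c d e f g h i $$ (1,0) = d"
  "mat3 a b c d e f g h i $$ (1,1) = e" "mat3 a b c d e f g h i $$ (1,2) = f"
  "mat3 a b c d e f g h i $$ (2,0) = g" "mat3 a b c d e f g h i $$ (2,1) = h"
  "mat3 a b c d e f g h i $$ (2,2) = i"
  "mat3 a b c d e f g h i $$ (0,Suc 0) = b" "mat3 a b c d e f g h i $$ (Suc 0,0) = d"
  "mat3 a b c d e f g h i $$ (Suc 0,Suc 0) = e" "mat3 a b c d e f g h i $$ (Suc 0,2) = f"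
  "mat3 a b c d e f g h i $$ (2,Suc 0) = h"
  by (simp_all add: mat3_def mat_of_rows_list_def)

lemma mat3_eta:
  "A \<in> carrier_mat 3 3 \<Longrightarrow>
    A = mat3 (A$$(0,0)) (A$$(0,1)) (A$$(0,2)) (A$$(1,0)) (A$$(1,1)) (A$$(1,2)) (A$$(2,0)) (A$$(2,1)) (A$$(2,2))"
  by (rule eq_matI) (auto simp: less3_iff)

lemma mat3_eq_iff:
  "mat3 a b c d e f g h i = mat3 a' b' c' d' e' f' g' h' i' \<longleftrightarrow>
    a = a' \<and> b = b' \<and> c = c' \<and> d = d' \<and> e = e' \<and> f = f' \<and> g = g' \<and> h = h' \<and> i = i'"
  by (metis mat3_index)

lemma mat3_mult:
  "mat3 a b c d e f g h i * mat3 a' b' c' d' e' f' g' h' i' =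
    mat3 (a*a' + b*d' + c*g') (a*b' + b*e' + c*h') (a*c' + b*f' + c*i')
         (d*a' + e*d' + f*g') (d*b' + e*e' + f*h') (d*c' + e*f' + f*i')
         (g*a' + h*d' + i*g') (g*b' + h*e' + i*h') (g*c' + h*f' + i*i')"
  by (rule eq_matI; auto simp: less3_iff scalar_prod_def;
      auto simp: mat3_def mat_of_rows_list_def col_def row_def numeral_3_eq_3 lessThan_Suc)

lemma one_mat3: "1\<^sub>m 3 = mat3 1 0 0 0 1 0 0 0 1"
  by (rule eq_matI) (auto simp: less3_iff)

lemma det_mat3_first_col_zero: "det (mat3 a b c 0 e f 0 h (i :: 'a :: comm_ring_1)) = a * (e*i - f*h)"
  by (subst det_3x3_first_col_zero) auto

lemma mat2_eqI:
  assumes "A \<in> carrier_mat 2 2" "B \<in> carrier_mat 2 2"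
    "A $$ (0,0) = B $$ (0,0)" "A $$ (0,1) = B $$ (0,1)" "A $$ (1,0) = B $$ (1,0)" "A $$ (1,1) = B $$ (1,1)"
  shows "A = B"
  using assms by (intro eq_matI) (auto simp: less2_iff)

section \<open>The embedding phi2 and upper triangular matrices\<close>

lemma SL2_iff:
  "y \<in> SL 2 \<longleftrightarrow> y \<in> carrier_mat 2 2 \<and>
     y$$(0,0) \<in> eis \<and> y$$(0,1) \<in> eis \<and> y$$(1,0) \<in> eis \<and> y$$(1,1) \<in> eis \<and>
     y$$(0,0) * y$$(1,1) - y$$(0,1) * y$$(1,0) = 1"
  unfolding SL_def by (auto simp: det_2x2 less2_iff)

lemma inv2_carrier: "inv2 y \<in> carrier_mat 2 2"
  unfolding inv2_def by (simp add: mat_of_rows_list_def carrier_matI)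

lemma inv2_index [simp]:
  "inv2 y $$ (0,0) = y $$ (1,1)" "inv2 y $$ (0,1) = - y $$ (0,1)"
  "inv2 y $$ (1,0) = - y $$ (1,0)" "inv2 y $$ (1,1) = y $$ (0,0)"
  "inv2 y $$ (0,Suc 0) = - y $$ (0,1)" "inv2 y $$ (Suc 0,0) = - y $$ (1,0)"
  "inv2 y $$ (Suc 0,Suc 0) = y $$ (0,0)"
  unfolding inv2_def by (simp_all add: mat_of_rows_list_def)

lemma inv2_SL2: "y \<in> SL 2 \<Longrightarrow> inv2 y \<in> SL 2"
  unfolding SL2_iff by (auto simp: inv2_carrier algebra_simps)

lemma phi2_eq_mat3: "phi2 y = mat3 1 0 0 0 (y$$(0,0)) (y$$(0,1)) 0 (y$$(1,0)) (y$$(1,1))"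
  unfolding phi2_def mat3_def by simp

lemma phi2_carrier: "phi2 y \<in> carrier_mat 3 3"
  unfolding phi2_eq_mat3 by simp

lemma phi2_SL3:
  assumes "y \<in> SL 2"
  shows "phi2 y \<in> SL 3"
  using assms unfolding SL2_iff
  by (auto simp: SL_def[of 3] phi2_eq_mat3 det_mat3_first_col_zero less3_iff)

lemma phi2_inverse:
  assumes "y \<in> SL 2"
  shows "phi2 (inv2 y) * phi2 y = 1\<^sub>m 3" and "phi2 y * phi2 (inv2 y) = 1\<^sub>m 3"
  using assms unfolding SL2_iff
  by (auto simp: phi2_eq_mat3 mat3_mult one_mat3 mat3_eq_iff algebra_simps)

lemma phi2_inv2_mult_eq_iff:
  assumes "y \<in> SL 2" "A \<in> carrier_mat 3 3" "T \<in> carrier_mat 3 3"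
  shows "A = phi2 (inv2 y) * T \<longleftrightarrow> phi2 y * A = T"
proof
  assume "A = phi2 (inv2 y) * T"
  then have "phi2 y * A = (phi2 y * phi2 (inv2 y)) * T"
    using assms phi2_carrier by (simp add: assoc_mult_mat[of _ 3 3 _ 3 _ 3])
  then show "phi2 y * A = T"
    using assms by (simp add: phi2_inverse)
next
  assume "phi2 y * A = T"
  then have "phi2 (inv2 y) * T = (phi2 (inv2 y) * phi2 y) * A"
    using assms phi2_carrier by (simp add: assoc_mult_mat[of _ 3 3 _ 3 _ 3])
  then show "A = phi2 (inv2 y) * T"
    using assms by (simp add: phi2_inverse)
qed

lemma phi2_mult_mat3:
  "phi2 y * mat3 a b c d e f g h i =
    mat3 a b c
      (y$$(0,0) * d + y$$(0,1) * g) (y$$(0,0) * e + y$$(0,1) * h) (y$$(0,0) * f + y$$(0,1) * i)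
      (y$$(1,0) * d + y$$(1,1) * g) (y$$(1,0) * e + y$$(1,1) * h) (y$$(1,0) * f + y$$(1,1) * i)"
  by (simp add: phi2_eq_mat3 mat3_mult)

lemma Delta2_eq_mat3:
  assumes "A \<in> Delta2"
  shows "A = mat3 (A$$(0,0)) (A$$(0,1)) (A$$(0,2)) 0 (A$$(1,1)) (A$$(1,2)) 0 (A$$(2,1)) (A$$(2,2))"
proof -
  have car: "A \<in> carrier_mat 3 3" and zeros: "A $$ (1,0) = 0" "A $$ (2,0) = 0"
    using assms by (auto simp: Delta2_def SL_def)
  from mat3_eta[OF car] show ?thesis unfolding zeros .
qed

lemma phi2_mult_Delta2:
  assumes "y \<in> SL 2" "A \<in> Delta2"
  shows "phi2 y * A \<in> Delta2"
proof -
  have "phi2 y * A \<in> SL 3"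
    using assms by (auto intro: SL_mult phi2_SL3 simp: Delta2_def)
  moreover have "(phi2 y * A) $$ (1,0) = 0" "(phi2 y * A) $$ (2,0) = 0"
    by (subst Delta2_eq_mat3[OF assms(2)], simp add: phi2_mult_mat3)+
  ultimately show ?thesis unfolding Delta2_def by blast
qed

definition upper_SL3 :: "complex mat set" where
  "upper_SL3 = {T \<in> Delta2. T $$ (2,1) = 0}"

lemma phi2_mult_in_upper_SL3_iff:
  assumes "y \<in> SL 2" "A \<in> Delta2"
  shows "phi2 y * A \<in> upper_SL3 \<longleftrightarrow> y$$(1,0) * A$$(1,1) + y$$(1,1) * A$$(2,1) = 0"
proof -
  have "(phi2 y * A) $$ (2,1) = y$$(1,0) * A$$(1,1) + y$$(1,1) * A$$(2,1)"
    by (subst Delta2_eq_mat3[OF assms(2)], simp add: phi2_mult_mat3)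
  then show ?thesis
    using phi2_mult_Delta2[OF assms] unfolding upper_SL3_def by simp
qed

lemma upper_SL3_mat3_iff:
  "mat3 p q r 0 e f 0 0 h \<in> upper_SL3 \<longleftrightarrow>
    p \<in> eis \<and> q \<in> eis \<and> r \<in> eis \<and> e \<in> eis \<and> f \<in> eis \<and> h \<in> eis \<and> p * e * h = 1"
  unfolding upper_SL3_def Delta2_def SL_def
  by (auto simp: det_mat3_first_col_zero less3_iff mult.assoc)

lemma upper_SL3_eq_mat3:
  assumes "T \<in> upper_SL3"
  shows "T = mat3 (T$$(0,0)) (T$$(0,1)) (T$$(0,2)) 0 (T$$(1,1)) (T$$(1,2)) 0 0 (T$$(2,2))"
proof -
  have "T \<in> Delta2" and zero: "T $$ (2,1) = 0"
    using assms by (auto simp: upper_SL3_def)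
  from Delta2_eq_mat3[OF this(1)] show ?thesis unfolding zero .
qed

section \<open>The representatives Y\<close>

definition eis_coprime :: "complex \<Rightarrow> complex \<Rightarrow> bool" where
  "eis_coprime e g \<longleftrightarrow> (\<exists>x\<in>eis. \<exists>z\<in>eis. x * e + z * g = 1)"

lemma Delta2_column_coprime:
  assumes "A \<in> Delta2"
  shows "eis_coprime (A$$(1,1)) (A$$(2,1))"
proof -
  have entries: "A$$(i,j) \<in> eis" if "i < 3" "j < 3" for i j
    using assms that by (auto simp: Delta2_def SL_def)
  have "(A$$(0,0) * A$$(2,2)) * A$$(1,1) + (- A$$(0,0) * A$$(1,2)) * A$$(2,1) = det A"
    by (subst Delta2_eq_mat3[OF assms]) (simp add: det_mat3_first_col_zero algebra_simps)
  also have "det A = 1"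
    using assms by (simp add: Delta2_def SL_def)
  finally show ?thesis
    unfolding eis_coprime_def using entries by (metis eis_mult eis_uminus less3_iff)
qed

lemma Y_cases:
  assumes "nonzero_reps C" "y \<in> Y C R"
  shows "y \<in> SL 2"
    and "y$$(1,0) = 0 \<Longrightarrow> y = 1\<^sub>m 2"
    and "y$$(1,0) \<noteq> 0 \<Longrightarrow> y$$(1,0) \<in> C \<and> y$$(0,0) \<in> R (y$$(1,0))"
proof -
  have "(1\<^sub>m 2 :: complex mat) \<in> SL 2"
    by (simp add: SL2_iff)
  moreover have "y = 1\<^sub>m 2 \<or> y \<in> SL 2 \<and> y$$(1,0) \<in> C \<and> y$$(0,0) \<in> R (y$$(1,0))"
    using assms(2) unfolding Y_def by blast
  moreover have "0 \<notin> C"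
    using assms(1) unfolding nonzero_reps_def by blast
  ultimately show "y \<in> SL 2" "y$$(1,0) = 0 \<Longrightarrow> y = 1\<^sub>m 2"
    "y$$(1,0) \<noteq> 0 \<Longrightarrow> y$$(1,0) \<in> C \<and> y$$(0,0) \<in> R (y$$(1,0))"
    by auto
qed

lemma annihilating_row_scale:
  assumes "y \<in> SL 2" "y$$(1,0) * e + y$$(1,1) * g = 0"
  defines "s \<equiv> y$$(0,0) * e + y$$(0,1) * g"
  shows "e = s * y$$(1,1)" and "g = - s * y$$(1,0)"
proof -
  have det: "y$$(0,0) * y$$(1,1) - y$$(0,1) * y$$(1,0) = 1"
    using assms(1) by (simp add: SL2_iff)
  have "s * y$$(1,1) = (y$$(0,0) * y$$(1,1) - y$$(0,1) * y$$(1,0)) * e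
      + y$$(0,1) * (y$$(1,0) * e + y$$(1,1) * g)"
    unfolding s_def by (simp add: algebra_simps)
  then show "e = s * y$$(1,1)" using assms(2) det by simp
  have "- s * y$$(1,0) = (y$$(0,0) * y$$(1,1) - y$$(0,1) * y$$(1,0)) * g
      - y$$(0,0) * (y$$(1,0) * e + y$$(1,1) * g)"
    unfolding s_def by (simp add: algebra_simps)
  then show "g = - s * y$$(1,0)" using assms(2) det by simp
qed

lemma annihilating_row_scale_unit:
  assumes "y \<in> SL 2" "y$$(1,0) * e + y$$(1,1) * g = 0" "eis_coprime e g" "e \<in> eis" "g \<in> eis"
  shows "y$$(0,0) * e + y$$(0,1) * g \<in> eis_units"
proof -
  define s where "s = y$$(0,0) * e + y$$(0,1) * g"
  obtain x z where xz: "x \<in> eis" "z \<in> eis" "x * e + z * g = 1"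
    using assms(3) unfolding eis_coprime_def by blast
  have row: "e = s * y$$(1,1)" "g = - s * y$$(1,0)"
    unfolding s_def by (fact annihilating_row_scale[OF assms(1,2)])+
  have "s * (x * y$$(1,1) - z * y$$(1,0)) = x * e + z * g"
    using row by (simp add: algebra_simps)
  then have "s * (x * y$$(1,1) - z * y$$(1,0)) = 1"
    using xz(3) by simp
  then show ?thesis
    unfolding s_def[symmetric] using assms(1,4,5) xz(1,2)
    by (intro eis_unitsI[of _ "x * y$$(1,1) - z * y$$(1,0)"]) (auto simp: s_def SL2_iff)
qed

lemma annihilating_rows_associated:
  assumes "y \<in> SL 2" "y' \<in> SL 2" "eis_coprime e g" "e \<in> eis" "g \<in> eis"
    "y$$(1,0) * e + y$$(1,1) * g = 0" "y'$$(1,0) * e + y'$$(1,1) * g = 0"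
  shows "\<exists>u\<in>eis_units. y$$(1,0) = u * y'$$(1,0) \<and> y$$(1,1) = u * y'$$(1,1)"
proof -
  define s s' where "s = y$$(0,0) * e + y$$(0,1) * g" "s' = y'$$(0,0) * e + y'$$(0,1) * g"
  have s: "s \<in> eis_units" "s' \<in> eis_units"
    using annihilating_row_scale_unit assms unfolding s_s'_def by blast+
  then have "s \<noteq> 0" by (simp add: eis_units_iff)
  have row: "e = s * y$$(1,1)" "g = - s * y$$(1,0)"
    unfolding s_s'_def by (fact annihilating_row_scale[OF assms(1,6)])+
  have row': "e = s' * y'$$(1,1)" "g = - s' * y'$$(1,0)"
    unfolding s_s'_def by (fact annihilating_row_scale[OF assms(2,7)])+
  have "s * y$$(1,0) = s' * y'$$(1,0)" "s * y$$(1,1) = s' * y'$$(1,1)"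
    using row row' by simp_all
  then have "y$$(1,0) = (s' * inverse s) * y'$$(1,0) \<and> y$$(1,1) = (s' * inverse s) * y'$$(1,1)"
    using \<open>s \<noteq> 0\<close> by (simp add: field_simps)
  moreover have "s' * inverse s \<in> eis_units"
    using s by (simp add: eis_units_mult eis_units_inverse)
  ultimately show ?thesis by blast
qed

lemma Y_eq_if_bottom_rows_associated:
  assumes C: "nonzero_reps C" and R: "residue_reps C R" and y: "y \<in> Y C R" "y' \<in> Y C R"
    and u: "u \<in> eis_units" "y$$(1,0) = u * y'$$(1,0)" "y$$(1,1) = u * y'$$(1,1)"
  shows "y = y'"
proof (cases "y'$$(1,0) = 0")
  case True
  then show ?thesis using u(2) Y_cases[OF C y(1)] Y_cases[OF C y(2)] by simp
next
  case False
  define a b a' b' c d where "a = y$$(0,0)" "b = y$$(0,1)" "a' = y'$$(0,0)" "b' = y'$$(0,1)"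
    "c = y'$$(1,0)" "d = y'$$(1,1)"
  have "u \<noteq> 0" using u(1) by (simp add: eis_units_iff)
  then have "y$$(1,0) \<noteq> 0" using False u(2) by simp
  then have reps: "y$$(1,0) \<in> C" "a \<in> R (y$$(1,0))" "c \<in> C" "a' \<in> R c"
    using Y_cases(3)[OF C y(1)] Y_cases(3)[OF C y(2)] False unfolding a_b_a'_b'_c_d_def by auto
  have "y$$(1,0) = c"
    using nonzero_reps_unique[OF C reps(1,3) u(1)] u(2) unfolding a_b_a'_b'_c_d_def by simp
  then have "u = 1" using u(2) False unfolding a_b_a'_b'_c_d_def by simp
  have dets: "a * d - b * c = 1" "a' * d - b' * c = 1"
    using Y_cases(1)[OF C y(1)] Y_cases(1)[OF C y(2)] u(3) \<open>y$$(1,0) = c\<close> \<open>u = 1\<close>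
    unfolding a_b_a'_b'_c_d_def SL2_iff by auto
  have "a - a' = a * (a' * d - b' * c) - a' * (a * d - b * c)"
    using dets by simp
  also have "\<dots> = c * (a' * b - a * b')"
    by (simp add: algebra_simps)
  finally have "eis_dvd c (a - a')"
    using Y_cases(1)[OF C y(1)] Y_cases(1)[OF C y(2)]
    unfolding eis_dvd_def a_b_a'_b'_c_d_def SL2_iff by auto
  then have "a = a'"
    using residue_reps_unique[OF R reps(3)] reps \<open>y$$(1,0) = c\<close> by simp
  then have "b = b'"
    using dets False unfolding a_b_a'_b'_c_d_def by (simp add: algebra_simps)
  show ?thesis
    using Y_cases(1)[OF C y(1)] Y_cases(1)[OF C y(2)] \<open>a = a'\<close> \<open>b = b'\<close> \<open>y$$(1,0) = c\<close>
      u(3) \<open>u = 1\<close>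
    unfolding a_b_a'_b'_c_d_def SL2_iff by (intro mat2_eqI) auto
qed

lemma ex_Y_with_bottom_row:
  assumes R: "residue_reps C R" and c: "c \<in> C" "c \<in> eis" and d: "d \<in> eis"
    and ab0: "a0 \<in> eis" "b0 \<in> eis" "a0 * d - b0 * c = 1"
  shows "\<exists>y\<in>Y C R. y$$(1,0) = c \<and> y$$(1,1) = d"
proof -
  obtain a where a: "a \<in> R c" "eis_dvd c (a0 - a)"
    using R c(1) ab0(1) unfolding residue_reps_def by blast
  then obtain m where m: "m \<in> eis" "a0 - a = c * m"
    unfolding eis_dvd_def by blast
  have "a \<in> eis" using R c(1) a(1) unfolding residue_reps_def by auto
  define y where "y = mat_of_rows_list 2 [[a, b0 - d * m], [c, d]]"
  have y_carrier: "y \<in> carrier_mat 2 2"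
    and y_entries: "y$$(0,0) = a" "y$$(0,1) = b0 - d * m" "y$$(1,0) = c" "y$$(1,1) = d"
    unfolding y_def by (simp_all add: mat_of_rows_list_def carrier_matI)
  have "a * d - (b0 - d * m) * c = (a0 - c * m) * d - (b0 - d * m) * c"
    using m(2) by (simp add: algebra_simps)
  also have "\<dots> = 1"
    using ab0(3) by (simp add: algebra_simps)
  finally have "y \<in> SL 2"
    unfolding SL2_iff y_entries using y_carrier \<open>a \<in> eis\<close> c d ab0 m by auto
  then have "y \<in> Y C R"
    unfolding Y_def using y_entries a(1) c(1) by auto
  then show ?thesis using y_entries by blast
qed

lemma ex_Y_annihilating:
  assumes C: "nonzero_reps C" and R: "residue_reps C R"
    and eg: "e \<in> eis" "g \<in> eis" "eis_coprime e g"
  shows "\<exists>y\<in>Y C R. y$$(1,0) * e + y$$(1,1) * g = 0"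
proof (cases "g = 0")
  case True
  have "1\<^sub>m 2 \<in> Y C R" by (simp add: Y_def)
  then show ?thesis using True by force
next
  case False
  then obtain c v where cv: "c \<in> C" "v \<in> eis_units" "g = v * c"
    using C eg(2) unfolding nonzero_reps_def by blast
  have "c \<in> eis" using C cv(1) unfolding nonzero_reps_def by auto
  have v: "v \<noteq> 0" "v \<in> eis" "inverse v \<in> eis"
    using cv(2) by (auto simp: eis_units_iff)
  obtain x z where xz: "x \<in> eis" "z \<in> eis" "x * e + z * g = 1"
    using eg(3) unfolding eis_coprime_def by blast
  \<comment> \<open>The row (c, -e/v) kills (e, g); the top row (-v x, -v z) completes it to determinant one.\<close>
  have "(- v * x) * (- e * inverse v) - (- v * z) * c = x * e + z * g"
    using v(1) cv(3) by (simp add: field_simps)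
  then obtain y where y: "y \<in> Y C R" "y$$(1,0) = c" "y$$(1,1) = - e * inverse v"
    using ex_Y_with_bottom_row[OF R cv(1) \<open>c \<in> eis\<close>, of "- e * inverse v" "- v * x" "- v * z"]
      eg v xz by auto
  have "y$$(1,0) * e + y$$(1,1) * g = c * e - e * (inverse v * v) * c"
    unfolding y(2,3) cv(3) by (simp add: algebra_simps)
  also have "\<dots> = 0"
    using v(1) by simp
  finally show ?thesis using y(1) by blast
qed

lemma ex_Y_triangularizing:
  assumes "nonzero_reps C" "residue_reps C R" "A \<in> Delta2"
  shows "\<exists>y\<in>Y C R. phi2 y * A \<in> upper_SL3"
proof -
  have "A$$(1,1) \<in> eis" "A$$(2,1) \<in> eis"
    using assms(3) by (auto simp: Delta2_def SL_def)
  with ex_Y_annihilating[OF assms(1,2)] Delta2_column_coprime[OF assms(3)]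
  obtain y where "y \<in> Y C R" "y$$(1,0) * A$$(1,1) + y$$(1,1) * A$$(2,1) = 0"
    by blast
  then show ?thesis
    using phi2_mult_in_upper_SL3_iff[OF Y_cases(1)[OF assms(1)] assms(3)] by blast
qed

lemma Y_triangularizing_unique:
  assumes C: "nonzero_reps C" and R: "residue_reps C R" and A: "A \<in> Delta2"
    and y: "y \<in> Y C R" "y' \<in> Y C R" "phi2 y * A \<in> upper_SL3" "phi2 y' * A \<in> upper_SL3"
  shows "y = y'"
proof -
  have SL2: "y \<in> SL 2" "y' \<in> SL 2" using Y_cases(1)[OF C] y(1,2) by auto
  have "A$$(1,1) \<in> eis" "A$$(2,1) \<in> eis"
    using A by (auto simp: Delta2_def SL_def)
  with annihilating_rows_associated[OF SL2 Delta2_column_coprime[OF A]]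
    phi2_mult_in_upper_SL3_iff[OF SL2(1) A] phi2_mult_in_upper_SL3_iff[OF SL2(2) A] y(3,4)
  obtain u where "u \<in> eis_units" "y$$(1,0) = u * y'$$(1,0)" "y$$(1,1) = u * y'$$(1,1)"
    by blast
  then show ?thesis
    using Y_eq_if_bottom_rows_associated[OF C R y(1,2)] by blast
qed

section \<open>Upper triangular matrices modulo Gamma_infty(3)\<close>

lemma D3_iff:
  "d \<in> D3 \<longleftrightarrow> (\<exists>i j k. d = mat3 i 0 0 0 j 0 0 0 k \<and> i \<in> eis \<and> j \<in> eis \<and> k \<in> eis \<and> i * j * k = 1)"
  unfolding D3_def mat3_def by blast

lemma U3_iff:
  "u \<in> U3 \<longleftrightarrow> (\<exists>\<alpha> \<beta> \<gamma>. u = mat3 1 \<alpha> \<beta> 0 1 \<gamma> 0 0 1 \<and> \<alpha> \<in> digits3 \<and> \<beta> \<in> digits3 \<and> \<gamma> \<in> digits3)"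
  unfolding U3_def mat3_def by blast

lemma Gamma_inf3_iff:
  "g \<in> Gamma_inf3 \<longleftrightarrow>
    (\<exists>x z w. g = mat3 1 x z 0 1 w 0 0 1 \<and> eis_dvd 3 x \<and> eis_dvd 3 z \<and> eis_dvd 3 w)"
proof
  assume g: "g \<in> Gamma_inf3"
  then have car: "g \<in> carrier_mat 3 3"
    unfolding Gamma_inf3_def Gamma3_def SL_def by auto
  from g have diag: "\<forall>i<3. g $$ (i,i) = 1" and lower: "\<forall>i<3. \<forall>j<i. g $$ (i,j) = 0"
    and cong: "\<forall>i<3. \<forall>j<3. eis_dvd 3 (g $$ (i,j) - (1\<^sub>m 3) $$ (i,j))"
    unfolding Gamma_inf3_def Gamma3_def by auto
  have "g = mat3 1 (g$$(0,1)) (g$$(0,2)) 0 1 (g$$(1,2)) 0 0 1"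
    using diag lower by (subst mat3_eta[OF car]) (auto simp: mat3_eq_iff less3_iff)
  moreover have "eis_dvd 3 (g$$(0,1))" "eis_dvd 3 (g$$(0,2))" "eis_dvd 3 (g$$(1,2))"
    using cong[rule_format, of 0 1] cong[rule_format, of 0 2] cong[rule_format, of 1 2] by auto
  ultimately show "\<exists>x z w. g = mat3 1 x z 0 1 w 0 0 1 \<and> eis_dvd 3 x \<and> eis_dvd 3 z \<and> eis_dvd 3 w"
    by blast
next
  assume "\<exists>x z w. g = mat3 1 x z 0 1 w 0 0 1 \<and> eis_dvd 3 x \<and> eis_dvd 3 z \<and> eis_dvd 3 w"
  then obtain x z w where g: "g = mat3 1 x z 0 1 w 0 0 1"
    and dvd: "eis_dvd 3 x" "eis_dvd 3 z" "eis_dvd 3 w"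
    by blast
  have "x \<in> eis" "z \<in> eis" "w \<in> eis"
    using dvd eis_dvd_imp_eis[OF eis_3] by blast+
  then have "g \<in> SL 3"
    unfolding SL_def g by (auto simp: det_mat3_first_col_zero less3_iff)
  moreover have "\<forall>i<3. \<forall>j<3. eis_dvd 3 (g $$ (i,j) - (1\<^sub>m 3) $$ (i,j))"
    using dvd by (auto simp: less3_iff g)
  ultimately show "g \<in> Gamma_inf3"
    unfolding Gamma_inf3_def Gamma3_def by (auto simp: less3_iff less2_iff g)
qed

lemma D3_carrier: "d \<in> D3 \<Longrightarrow> d \<in> carrier_mat 3 3"
  and U3_carrier: "u \<in> U3 \<Longrightarrow> u \<in> carrier_mat 3 3"
  and Gamma_inf3_carrier: "g \<in> Gamma_inf3 \<Longrightarrow> g \<in> carrier_mat 3 3"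
  by (auto simp: D3_iff U3_iff Gamma_inf3_iff)

lemma diag_mult_unipotent:
  "mat3 i 0 0 0 j 0 0 0 k * mat3 1 a b 0 1 c 0 0 1 = mat3 i (i * a) (i * b) 0 j (j * c) 0 0 (k :: 'a :: comm_ring_1)"
  by (simp add: mat3_mult)

lemma unipotent_mult:
  "mat3 1 a b 0 1 c 0 0 1 * mat3 1 a' b' 0 1 c' 0 0 1 =
    mat3 1 (a + a') (b + a * c' + b') 0 1 (c + c') 0 0 (1 :: 'a :: comm_ring_1)"
  by (simp add: mat3_mult algebra_simps)

lemma U3_mult_Gamma_inf3:
  assumes "u \<in> U3" "g \<in> Gamma_inf3"
  obtains a b c where "a \<in> eis" "b \<in> eis" "c \<in> eis" "u * g = mat3 1 a b 0 1 c 0 0 1"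
proof -
  obtain \<alpha> \<beta> \<gamma> where u: "u = mat3 1 \<alpha> \<beta> 0 1 \<gamma> 0 0 1" "\<alpha> \<in> eis" "\<beta> \<in> eis" "\<gamma> \<in> eis"
    using assms(1) digits3_subset_eis unfolding U3_iff by blast
  obtain x z w where g: "g = mat3 1 x z 0 1 w 0 0 1" "x \<in> eis" "z \<in> eis" "w \<in> eis"
    using assms(2) eis_dvd_imp_eis[of 3] unfolding Gamma_inf3_iff by auto
  have "u * g = mat3 1 (\<alpha> + x) (\<beta> + \<alpha> * w + z) 0 1 (\<gamma> + w) 0 0 1"
    unfolding u(1) g(1) by (rule unipotent_mult)
  then show ?thesis
    using u g by (intro that[of "\<alpha> + x" "\<beta> + \<alpha> * w + z" "\<gamma> + w"]) auto
qed

lemma unipotent_in_U3_Gamma_inf3: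
  assumes "a \<in> eis" "b \<in> eis" "c \<in> eis"
  shows "\<exists>u\<in>U3. \<exists>g\<in>Gamma_inf3. mat3 1 a b 0 1 c 0 0 1 = u * g"
proof -
  obtain \<alpha> \<gamma> where \<alpha>: "\<alpha> \<in> digits3" "eis_dvd 3 (a - \<alpha>)" and \<gamma>: "\<gamma> \<in> digits3" "eis_dvd 3 (c - \<gamma>)"
    using ex_digits3_cong assms(1,3) by blast
  have "\<alpha> \<in> eis" "\<gamma> \<in> eis"
    using \<alpha>(1) \<gamma>(1) digits3_subset_eis by auto
  then have "b - \<alpha> * (c - \<gamma>) \<in> eis"
    using assms by simp
  \<comment> \<open>The corner entry of u g is \<beta> + \<alpha> w + z, so \<beta> is chosen only after w = c - \<gamma>.\<close>
  then obtain \<beta> where \<beta>: "\<beta> \<in> digits3" "eis_dvd 3 (b - \<alpha> * (c - \<gamma>) - \<beta>)"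
    using ex_digits3_cong by blast
  have "mat3 1 \<alpha> \<beta> 0 1 \<gamma> 0 0 1 \<in> U3"
    unfolding U3_iff using \<alpha> \<beta> \<gamma> by blast
  moreover have "mat3 1 (a - \<alpha>) (b - \<alpha> * (c - \<gamma>) - \<beta>) 0 1 (c - \<gamma>) 0 0 1 \<in> Gamma_inf3"
    unfolding Gamma_inf3_iff using \<alpha> \<beta> \<gamma> by blast
  moreover have "mat3 1 a b 0 1 c 0 0 1 =
      mat3 1 \<alpha> \<beta> 0 1 \<gamma> 0 0 1 * mat3 1 (a - \<alpha>) (b - \<alpha> * (c - \<gamma>) - \<beta>) 0 1 (c - \<gamma>) 0 0 1"
    unfolding unipotent_mult mat3_eq_iff by (simp add: algebra_simps)
  ultimately show ?thesis by blast
qed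

lemma U3_Gamma_inf3_unique:
  assumes "u \<in> U3" "u' \<in> U3" "g \<in> Gamma_inf3" "g' \<in> Gamma_inf3" "u * g = u' * g'"
  shows "u = u'"
proof -
  obtain \<alpha> \<beta> \<gamma> where u: "u = mat3 1 \<alpha> \<beta> 0 1 \<gamma> 0 0 1" "\<alpha> \<in> digits3" "\<beta> \<in> digits3" "\<gamma> \<in> digits3"
    using assms(1) unfolding U3_iff by blast
  obtain \<alpha>' \<beta>' \<gamma>' where u': "u' = mat3 1 \<alpha>' \<beta>' 0 1 \<gamma>' 0 0 1"
    "\<alpha>' \<in> digits3" "\<beta>' \<in> digits3" "\<gamma>' \<in> digits3"
    using assms(2) unfolding U3_iff by blast
  obtain x z w where g: "g = mat3 1 x z 0 1 w 0 0 1" "eis_dvd 3 x" "eis_dvd 3 z" "eis_dvd 3 w"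
    using assms(3) unfolding Gamma_inf3_iff by blast
  obtain x' z' w' where g': "g' = mat3 1 x' z' 0 1 w' 0 0 1" "eis_dvd 3 x'" "eis_dvd 3 z'" "eis_dvd 3 w'"
    using assms(4) unfolding Gamma_inf3_iff by blast
  have eqs: "\<alpha> + x = \<alpha>' + x'" "\<beta> + \<alpha> * w + z = \<beta>' + \<alpha>' * w' + z'" "\<gamma> + w = \<gamma>' + w'"
    using assms(5) unfolding u(1) u'(1) g(1) g'(1) unipotent_mult mat3_eq_iff by simp_all
  have "\<alpha> - \<alpha>' = x' - x" "\<gamma> - \<gamma>' = w' - w"
    using eqs(1,3) by (simp_all add: algebra_simps)
  then have "\<alpha> = \<alpha>'" "\<gamma> = \<gamma>'"
    using digits3_cong_imp_eq u u' g g' eis_dvd_diff by metis+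
  have "\<beta> - \<beta>' = (z' + \<alpha> * w') - (z + \<alpha> * w)"
    using eqs(2) \<open>\<alpha> = \<alpha>'\<close> by (simp add: algebra_simps)
  moreover have "eis_dvd 3 ((z' + \<alpha> * w') - (z + \<alpha> * w))"
    using g g' u(2) digits3_subset_eis
    by (intro eis_dvd_diff eis_dvd_add eis_dvd_mult_left) auto
  ultimately have "\<beta> = \<beta>'"
    using digits3_cong_imp_eq u(3) u'(3) by metis
  show ?thesis
    unfolding u(1) u'(1) using \<open>\<alpha> = \<alpha>'\<close> \<open>\<beta> = \<beta>'\<close> \<open>\<gamma> = \<gamma>'\<close> by simp
qed

lemma D3_U3_Gamma_inf3_mult_in_upper_SL3:
  assumes "d \<in> D3" "u \<in> U3" "g \<in> Gamma_inf3"
  shows "d * u * g \<in> upper_SL3"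
proof -
  obtain i j k where d: "d = mat3 i 0 0 0 j 0 0 0 k" "i \<in> eis" "j \<in> eis" "k \<in> eis" "i * j * k = 1"
    using assms(1) unfolding D3_iff by blast
  obtain a b c where abc: "a \<in> eis" "b \<in> eis" "c \<in> eis" "u * g = mat3 1 a b 0 1 c 0 0 1"
    using U3_mult_Gamma_inf3[OF assms(2,3)] .
  have "d * u * g = d * (u * g)"
    using assms by (simp add: assoc_mult_mat[OF D3_carrier U3_carrier Gamma_inf3_carrier])
  also have "\<dots> = mat3 i (i * a) (i * b) 0 j (j * c) 0 0 k"
    unfolding d(1) abc(4) by (rule diag_mult_unipotent)
  finally show ?thesis
    using d abc by (simp add: upper_SL3_mat3_iff)
qed

lemma upper_SL3_decomp:
  assumes "T \<in> upper_SL3"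
  shows "\<exists>d\<in>D3. \<exists>u\<in>U3. \<exists>g\<in>Gamma_inf3. T = d * u * g"
proof -
  define p q r e f h where "p = T$$(0,0)" "q = T$$(0,1)" "r = T$$(0,2)"
    "e = T$$(1,1)" "f = T$$(1,2)" "h = T$$(2,2)"
  have T: "T = mat3 p q r 0 e f 0 0 h"
    unfolding p_q_r_e_f_h_def by (rule upper_SL3_eq_mat3[OF assms])
  have entries: "p \<in> eis" "q \<in> eis" "r \<in> eis" "e \<in> eis" "f \<in> eis" "h \<in> eis" "p * e * h = 1"
    using assms unfolding T upper_SL3_mat3_iff by auto
  \<comment> \<open>Since p e h = 1, these entries are q/p, r/p and f/e.\<close>
  obtain u g where ug: "u \<in> U3" "g \<in> Gamma_inf3" "mat3 1 (q * e * h) (r * e * h) 0 1 (f * p * h) 0 0 1 = u * g"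
    using unipotent_in_U3_Gamma_inf3[of "q * e * h" "r * e * h" "f * p * h"] entries by auto
  have d: "mat3 p 0 0 0 e 0 0 0 h \<in> D3"
    unfolding D3_iff using entries by blast
  have "T = mat3 p 0 0 0 e 0 0 0 h * mat3 1 (q * e * h) (r * e * h) 0 1 (f * p * h) 0 0 1"
    unfolding T diag_mult_unipotent mat3_eq_iff using entries(7)
    by (simp add: algebra_simps)
  also have "\<dots> = mat3 p 0 0 0 e 0 0 0 h * u * g"
    using ug by (simp add: assoc_mult_mat[OF D3_carrier U3_carrier Gamma_inf3_carrier] d)
  finally show ?thesis using d ug by blast
qed

lemma D3_U3_Gamma_inf3_unique:
  assumes "d \<in> D3" "d' \<in> D3" "u \<in> U3" "u' \<in> U3" "g \<in> Gamma_inf3" "g' \<in> Gamma_inf3"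
    and eq: "d * u * g = d' * u' * g'"
  shows "d = d' \<and> u = u'"
proof -
  obtain i j k where d: "d = mat3 i 0 0 0 j 0 0 0 k" "i * j * k = 1"
    using assms(1) unfolding D3_iff by blast
  obtain i' j' k' where d': "d' = mat3 i' 0 0 0 j' 0 0 0 k'"
    using assms(2) unfolding D3_iff by blast
  obtain a b c where N: "u * g = mat3 1 a b 0 1 c 0 0 1"
    using U3_mult_Gamma_inf3[OF assms(3,5)] by blast
  obtain a' b' c' where N': "u' * g' = mat3 1 a' b' 0 1 c' 0 0 1"
    using U3_mult_Gamma_inf3[OF assms(4,6)] by blast
  have "d * (u * g) = d' * (u' * g')"
    using eq assms by (simp add: assoc_mult_mat[OF D3_carrier U3_carrier Gamma_inf3_carrier])
  then have "mat3 i (i * a) (i * b) 0 j (j * c) 0 0 k = mat3 i' (i' * a') (i' * b') 0 j' (j' * c') 0 0 k'"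
    unfolding d(1) d'(1) N N' diag_mult_unipotent .
  moreover have "i \<noteq> 0" "j \<noteq> 0"
    using d(2) by auto
  ultimately have "d = d'" "u * g = u' * g'"
    unfolding d(1) d'(1) N N' mat3_eq_iff by auto
  then show ?thesis
    using U3_Gamma_inf3_unique assms(3-6) by blast
qed

section \<open>The decomposition of Delta2\<close>

lemma Delta2_carrier: "A \<in> Delta2 \<Longrightarrow> A \<in> carrier_mat 3 3"
  by (simp add: Delta2_def SL_def)

lemma mem_piece_iff:
  assumes y: "y \<in> SL 2" and du: "d \<in> D3" "u \<in> U3"
  shows "A \<in> piece y d u \<longleftrightarrow> A \<in> carrier_mat 3 3 \<and> (\<exists>g\<in>Gamma_inf3. phi2 y * A = d * u * g)"
proof -
  have T: "d * u * g \<in> carrier_mat 3 3" if "g \<in> Gamma_inf3" for g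
    using D3_U3_Gamma_inf3_mult_in_upper_SL3[OF du that] Delta2_carrier
    unfolding upper_SL3_def by blast
  have assoc: "phi2 (inv2 y) * d * u * g = phi2 (inv2 y) * (d * u * g)" if "g \<in> Gamma_inf3" for g
    using du that
    by (simp add: assoc_mult_mat[OF mult_carrier_mat[OF phi2_carrier D3_carrier] U3_carrier Gamma_inf3_carrier]
      assoc_mult_mat[OF phi2_carrier D3_carrier mult_carrier_mat[OF U3_carrier Gamma_inf3_carrier]]
      assoc_mult_mat[OF D3_carrier U3_carrier Gamma_inf3_carrier])
  have "A \<in> piece y d u \<longleftrightarrow> (\<exists>g\<in>Gamma_inf3. A = phi2 (inv2 y) * d * u * g)"
    unfolding piece_def by blast
  also have "\<dots> \<longleftrightarrow> (\<exists>g\<in>Gamma_inf3. A = phi2 (inv2 y) * (d * u * g))"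
    using assoc by (intro bex_cong) auto
  also have "\<dots> \<longleftrightarrow> A \<in> carrier_mat 3 3 \<and> (\<exists>g\<in>Gamma_inf3. phi2 y * A = d * u * g)"
  proof
    assume "\<exists>g\<in>Gamma_inf3. A = phi2 (inv2 y) * (d * u * g)"
    then obtain g where g: "g \<in> Gamma_inf3" "A = phi2 (inv2 y) * (d * u * g)"
      by blast
    then have "A \<in> carrier_mat 3 3"
      using T phi2_carrier by (metis mult_carrier_mat)
    with g show "A \<in> carrier_mat 3 3 \<and> (\<exists>g\<in>Gamma_inf3. phi2 y * A = d * u * g)"
      using phi2_inv2_mult_eq_iff[OF y _ T] by blast
  qed (use phi2_inv2_mult_eq_iff[OF y _ T] in blast)
  finally show ?thesis .
qed

lemma piece_subset_Delta2:
  assumes "nonzero_reps C" "y \<in> Y C R" "d \<in> D3" "u \<in> U3"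
  shows "piece y d u \<subseteq> Delta2"
proof
  fix A
  assume "A \<in> piece y d u"
  have y: "y \<in> SL 2"
    using Y_cases(1)[OF assms(1,2)] .
  then obtain g where A: "A \<in> carrier_mat 3 3" "g \<in> Gamma_inf3" "phi2 y * A = d * u * g"
    using mem_piece_iff[OF y assms(3,4)] \<open>A \<in> piece y d u\<close> by blast
  have T: "d * u * g \<in> Delta2"
    using D3_U3_Gamma_inf3_mult_in_upper_SL3[OF assms(3,4) A(2)] unfolding upper_SL3_def by blast
  then have "A = phi2 (inv2 y) * (d * u * g)"
    using phi2_inv2_mult_eq_iff[OF y A(1) Delta2_carrier] A(3) by blast
  then show "A \<in> Delta2"
    using phi2_mult_Delta2[OF inv2_SL2[OF y] T] by simp
qed

lemma Delta2_subset_pieces: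
  assumes "nonzero_reps C" "residue_reps C R"
  shows "Delta2 \<subseteq> (\<Union>y\<in>Y C R. \<Union>d\<in>D3. \<Union>u\<in>U3. piece y d u)"
proof
  fix A
  assume A: "A \<in> Delta2"
  obtain y where y: "y \<in> Y C R" "phi2 y * A \<in> upper_SL3"
    using ex_Y_triangularizing[OF assms A] by blast
  obtain d u g where dug: "d \<in> D3" "u \<in> U3" "g \<in> Gamma_inf3" "phi2 y * A = d * u * g"
    using upper_SL3_decomp[OF y(2)] by blast
  then have "A \<in> piece y d u"
    using mem_piece_iff[OF Y_cases(1)[OF assms(1) y(1)]] Delta2_carrier[OF A] by blast
  then show "A \<in> (\<Union>y\<in>Y C R. \<Union>d\<in>D3. \<Union>u\<in>U3. piece y d u)"
    using y(1) dug(1,2) by blast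
qed

lemma pieces_disjoint:
  assumes C: "nonzero_reps C" and R: "residue_reps C R"
    and yduy'd'u': "y \<in> Y C R" "d \<in> D3" "u \<in> U3" "y' \<in> Y C R" "d' \<in> D3" "u' \<in> U3"
    and ne: "(y, d, u) \<noteq> (y', d', u')"
  shows "piece y d u \<inter> piece y' d' u' = {}"
proof (rule ccontr)
  assume "piece y d u \<inter> piece y' d' u' \<noteq> {}"
  then obtain A where A: "A \<in> piece y d u" "A \<in> piece y' d' u'"
    by blast
  obtain g where g: "g \<in> Gamma_inf3" "phi2 y * A = d * u * g"
    using A(1) mem_piece_iff[OF Y_cases(1)[OF C] yduy'd'u'(2,3)] yduy'd'u'(1) by blast
  obtain g' where g': "g' \<in> Gamma_inf3" "phi2 y' * A = d' * u' * g'"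
    using A(2) mem_piece_iff[OF Y_cases(1)[OF C] yduy'd'u'(5,6)] yduy'd'u'(4) by blast
  have "A \<in> Delta2"
    using A(1) piece_subset_Delta2[OF C yduy'd'u'(1-3)] by blast
  moreover have "phi2 y * A \<in> upper_SL3" "phi2 y' * A \<in> upper_SL3"
    using g g' yduy'd'u' by (simp_all add: D3_U3_Gamma_inf3_mult_in_upper_SL3)
  ultimately have "y = y'"
    using Y_triangularizing_unique[OF C R] yduy'd'u'(1,4) by blast
  then have "d = d' \<and> u = u'"
    using D3_U3_Gamma_inf3_unique[OF yduy'd'u'(2,5,3,6) g(1) g'(1)] g(2) g'(2) by simp
  with \<open>y = y'\<close> ne show False
    by simp
qed

theorem theorem2p14:
  fixes C :: "complex set" and R :: "complex \<Rightarrow> complex set"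
  assumes "nonzero_reps C" and "residue_reps C R"
  shows "Delta2 = (\<Union>y\<in>Y C R. \<Union>d\<in>D3. \<Union>u\<in>U3. piece y d u)
    \<and> (\<forall>y\<in>Y C R. \<forall>d\<in>D3. \<forall>u\<in>U3. \<forall>y'\<in>Y C R. \<forall>d'\<in>D3. \<forall>u'\<in>U3.
         (y, d, u) \<noteq> (y', d', u') \<longrightarrow> piece y d u \<inter> piece y' d' u' = {})"
proof (intro conjI ballI impI)
  show "Delta2 = (\<Union>y\<in>Y C R. \<Union>d\<in>D3. \<Union>u\<in>U3. piece y d u)"
    using Delta2_subset_pieces[OF assms] piece_subset_Delta2[OF assms(1)] by blast
next
  fix y d u y' d' u'
  assume "y \<in> Y C R" "d \<in> D3" "u \<in> U3" "y' \<in> Y C R" "d' \<in> D3" "u' \<in> U3"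
    and "(y, d, u) \<noteq> (y', d', u')"
  then show "piece y d u \<inter> piece y' d' u' = {}"
    by (rule pieces_disjoint[OF assms])
qed

end
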